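(* Let $\alpha,\beta,\gamma,\delta\in\mathbb{C}$ be parameters for which all gamma functions and hypergeometric functions below are well-defined, and for $z\ne0$ let $$f(\alpha,\beta,\gamma,\delta;z)=\sum_{\nu=0}^{\infty}\frac{z^{-\nu}\Gamma(\alpha+\gamma+\nu)}{\nu!\,\Gamma(\beta+\nu)}\,E\left(\begin{matrix}\alpha+1,&\beta+\nu\\ \delta,&\beta+1+\nu\end{matrix};z\right).$$ Then $$f(\alpha,\beta,\gamma,\delta;z)=\frac{\Gamma(\alpha+1)\Gamma(\alpha+\gamma)}{\Gamma(\beta+1)\Gamma(\delta)}+O(z^{-1})\quad\text{as }|z|\to\infty.$$
   Context: For complex parameters $a_1,\dots,a_p$, $b_1,\dots,b_q$ with $p\le q$ and $z\in\mathbb{C}\setminus\{0\}$, the MacRobert $E$-function is $$E\left(\begin{matrix}a_1,\dots,a_p\\ b_1,\dots,b_q\end{matrix};z\right)=\frac{\prod_{j=1}^p\Gamma(a_j)}{\prod_{j=1}^q\Gamma(b_j)}\,{}_pF_q\left(\begin{matrix}a_1,\dots,a_p\\ b_1,\dots,b_q\end{matrix};-\frac1z\right),$$ where ${}_pF_q$ is the generalized hypergeometric function. *)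

theory Defs
  imports "HOL-Analysis.Analysis" "HOL-Library.Landau_Symbols"
begin

definition hypergeom :: "complex list \<Rightarrow> complex list \<Rightarrow> complex \<Rightarrow> complex" where
  "hypergeom as bs z =
     (\<Sum>n. (prod_list (map (\<lambda>a. pochhammer a n) as) /
            prod_list (map (\<lambda>b. pochhammer b n) bs)) * z ^ n / fact n)"

text \<open>MacRobert E-function (p at most q).\<close>
definition macrobertE :: "complex list \<Rightarrow> complex list \<Rightarrow> complex \<Rightarrow> complex" where
  "macrobertE as bs z =
     prod_list (map Gamma as) / prod_list (map Gamma bs) * hypergeom as bs (- 1 / z)"

definition fE :: "complex \<Rightarrow> complex \<Rightarrow> complex \<Rightarrow> complex \<Rightarrow> complex \<Rightarrow> complex" where
  "fE \<alpha> \<beta> \<gamma> \<delta> z =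
     (\<Sum>\<nu>. (inverse z) ^ \<nu> * Gamma (\<alpha> + \<gamma> + of_nat \<nu>) / (fact \<nu> * Gamma (\<beta> + of_nat \<nu>))
          * macrobertE [\<alpha> + 1, \<beta> + of_nat \<nu>] [\<delta>, \<beta> + 1 + of_nat \<nu>] z)"

end

theory Submission imports Defs begin

text \<open>Writing \<open>E(\<alpha>+1, \<beta>+\<nu>; \<delta>, \<beta>+1+\<nu>; z)\<close> as a \<open>Gamma\<close> quotient times \<open>\<^sub>2F\<^sub>2(-1/z)\<close>, the \<open>\<nu>\<close>-th
  term of \<open>f\<close> becomes \<open>z\<^sup>-\<^sup>\<nu> \<Gamma>(\<alpha>+\<gamma>) (\<alpha>+\<gamma>)\<^sub>\<nu>/\<nu>! \<cdot> \<Gamma>(\<alpha>+1)/(\<Gamma>(\<delta>)\<Gamma>(\<beta>+1)(\<beta>+1)\<^sub>\<nu>)\<close> times that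
  \<open>\<^sub>2F\<^sub>2\<close> value. Each \<open>\<^sub>2F\<^sub>2\<close> value is \<open>1 + O(1/z)\<close> uniformly in \<open>\<nu>\<close>, and the prefactors grow at
  most geometrically in \<open>\<nu>\<close>, so for large \<open>|z|\<close> the series is dominated by a geometric series in
  \<open>1/|z|\<close>: the term \<open>\<nu> = 0\<close> is the constant up to \<open>O(1/z)\<close>, and all other terms together are \<open>O(1/z)\<close>.\<close>

lemma bounded_inverse_add_of_nat:
  fixes s :: complex
  shows "\<exists>B\<ge>1. \<forall>k. norm (inverse (s + of_nat k)) \<le> B"
proof -
  define N where "N = nat \<lceil>norm s\<rceil> + 1"
  define B where "B = max 1 (Max ((\<lambda>k. norm (inverse (s + of_nat k))) ` {..N}))"
  have "norm (inverse (s + of_nat k)) \<le> B" for k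
  proof (cases "k \<le> N")
    case True
    thus ?thesis unfolding B_def by (intro max.coboundedI2 Max_ge) auto
  next
    case False
    hence "real k \<ge> norm s + 1" unfolding N_def by linarith
    moreover have "norm (s + of_nat k) \<ge> real k - norm s"
      using norm_triangle_ineq2[of "of_nat k" "-s"] by (simp add: add.commute)
    ultimately have "norm (s + of_nat k) \<ge> 1" by linarith
    hence "norm (inverse (s + of_nat k)) \<le> 1"
      by (simp add: norm_inverse inverse_le_1_iff)
    thus ?thesis unfolding B_def by linarith
  qed
  thus ?thesis by (intro exI[of _ B]) (auto simp: B_def)
qed

lemma norm_inverse_pochhammer_le:
  fixes s :: complex
  assumes "\<forall>k. norm (inverse (s + of_nat k)) \<le> B"
  shows "norm (inverse (pochhammer s n)) \<le> B ^ n"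
proof (induction n)
  case (Suc n)
  have "0 \<le> B" using assms norm_ge_zero order_trans by blast
  hence "norm (inverse (pochhammer s n)) * norm (inverse (s + of_nat n)) \<le> B ^ n * B"
    using Suc assms by (intro mult_mono) auto
  thus ?case by (simp add: pochhammer_Suc norm_mult mult.commute)
qed simp

lemma norm_pochhammer_div_fact_le:
  fixes s :: complex
  shows "norm (pochhammer s n / fact n) \<le> (1 + norm s) ^ n"
proof (induction n)
  case (Suc n)
  have split: "pochhammer s (Suc n) / fact (Suc n)
      = (pochhammer s n / fact n) * ((s + of_nat n) / of_nat (Suc n))"
    by (simp add: pochhammer_Suc field_simps fact_Suc del: of_nat_Suc)
  have "norm (s + of_nat n) \<le> norm s + real n"
    using norm_triangle_ineq[of s "of_nat n"] by simp
  also have "\<dots> \<le> (1 + norm s) * real (Suc n)" by (simp add: algebra_simps)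
  finally have "norm (s + of_nat n) \<le> (1 + norm s) * real (Suc n)" .
  hence "norm ((s + of_nat n) / of_nat (Suc n)) \<le> 1 + norm s"
    by (simp add: norm_divide divide_le_eq del: of_nat_Suc)
  hence "norm (pochhammer s (Suc n) / fact (Suc n)) \<le> (1 + norm s) ^ n * (1 + norm s)"
    unfolding split norm_mult using Suc by (intro mult_mono) auto
  thus ?case by (simp add: mult.commute)
qed simp

lemma norm_pochhammer_div_pochhammer_plus1_le:
  fixes x :: complex
  assumes "\<forall>k. norm (inverse (x + 1 + of_nat k)) \<le> B"
  shows "norm (pochhammer x n / pochhammer (x + 1) n) \<le> (1 + B) ^ n"
proof (induction n)
  case (Suc n)
  let ?y = "x + 1 + of_nat n"
  have split: "pochhammer x (Suc n) / pochhammer (x + 1) (Suc n)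
      = (pochhammer x n / pochhammer (x + 1) n) * ((?y - 1) * inverse ?y)"
    by (simp add: pochhammer_Suc field_simps)
  have "norm ((?y - 1) * inverse ?y) = norm (?y * inverse ?y - inverse ?y)"
    by (simp add: algebra_simps)
  also have "\<dots> \<le> norm (?y * inverse ?y) + norm (inverse ?y)" by (rule norm_triangle_ineq4)
  also have "norm (?y * inverse ?y) \<le> 1" by (cases "?y = 0") auto
  finally have "norm ((?y - 1) * inverse ?y) \<le> 1 + B" using assms by (smt (verit))
  hence "norm (pochhammer x (Suc n) / pochhammer (x + 1) (Suc n)) \<le> (1 + B) ^ n * (1 + B)"
    unfolding split norm_mult using Suc by (intro mult_mono) (auto intro: order_trans[OF norm_ge_zero])
  thus ?case by (simp add: mult.commute)
qed simp

lemma geometric_series_tail_le: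
  fixes c :: "nat \<Rightarrow> 'a :: banach"
  assumes le: "\<And>n. norm (c n) \<le> C * q ^ n" and "0 \<le> q" "q \<le> 1/2"
  shows "norm (suminf c - c 0) \<le> 2 * C * q"
proof -
  have "norm (c 0) \<le> C" using le[of 0] by simp
  hence "0 \<le> C" using norm_ge_zero order_trans by blast
  have geom: "summable (\<lambda>n. q ^ n)" using assms by (intro summable_geometric) auto
  have "summable c" by (rule summable_comparison_test'[OF summable_mult[OF geom] le])
  have tail_le: "norm (c (Suc n)) \<le> C * q * q ^ n" for n
    using le[of "Suc n"] by (simp add: mult.assoc)
  have tail_summable: "summable (\<lambda>n. norm (c (Suc n)))"
    using tail_le by (intro summable_comparison_test'[OF summable_mult[OF geom]]) auto
  have "norm (suminf c - c 0) = norm (\<Sum>n. c (Suc n))"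
    using suminf_split_head[OF \<open>summable c\<close>] by simp
  also have "\<dots> \<le> (\<Sum>n. norm (c (Suc n)))" by (rule summable_norm[OF tail_summable])
  also have "\<dots> \<le> (\<Sum>n. C * q * q ^ n)"
    by (rule suminf_le[OF tail_le tail_summable summable_mult[OF geom]])
  also have "\<dots> = C * q / (1 - q)" using suminf_geometric[of q] assms by (subst suminf_mult) auto
  also have "\<dots> \<le> C * q * 2"
    using assms \<open>0 \<le> C\<close> mult_nonneg_nonneg[of "C * q" "1 - 2 * q"]
    by (simp add: divide_le_eq algebra_simps)
  finally show ?thesis by simp
qed

text \<open>The constant depends on \<open>b\<close> only through \<open>B\<close>, which makes the estimate uniform along
  the shifts \<open>b = \<beta> + \<nu>\<close>.\<close>

lemma hypergeom_2F2_minus_one_le: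
  fixes a b d w :: complex
  assumes Bb: "\<forall>k. norm (inverse (b + 1 + of_nat k)) \<le> B"
      and Dd: "\<forall>k. norm (inverse (d + of_nat k)) \<le> D"
      and small: "(1 + norm a) * (1 + B) * D * norm w \<le> 1/2"
  shows "norm (hypergeom [a, b] [d, b + 1] w - 1) \<le> 2 * ((1 + norm a) * (1 + B) * D) * norm w"
proof -
  define K where "K = (1 + norm a) * (1 + B) * D"
  define c where "c n = (prod_list (map (\<lambda>a. pochhammer a n) [a, b]) /
            prod_list (map (\<lambda>b. pochhammer b n) [d, b + 1])) * w ^ n / fact n" for n
  have "0 \<le> B" "0 \<le> D" using Bb Dd norm_ge_zero order_trans by blast+
  have "norm (c n) \<le> 1 * (K * norm w) ^ n" for n
  proof -
    have "c n = (pochhammer a n / fact n) * (pochhammer b n / pochhammer (b + 1) n)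
                * inverse (pochhammer d n) * w ^ n"
      unfolding c_def by (simp add: field_simps)
    hence "norm (c n) = norm (pochhammer a n / fact n) * norm (pochhammer b n / pochhammer (b + 1) n)
                * norm (inverse (pochhammer d n)) * norm w ^ n"
      by (simp only: norm_mult norm_power)
    also have "\<dots> \<le> (1 + norm a) ^ n * (1 + B) ^ n * D ^ n * norm w ^ n"
      using norm_pochhammer_div_fact_le[of a n] norm_pochhammer_div_pochhammer_plus1_le[OF Bb, of n]
        norm_inverse_pochhammer_le[OF Dd, of n] \<open>0 \<le> B\<close> \<open>0 \<le> D\<close>
      by (intro mult_mono mult_nonneg_nonneg) auto
    also have "\<dots> = 1 * (K * norm w) ^ n" unfolding K_def by (simp add: power_mult_distrib)
    finally show ?thesis .
  qed
  moreover have "0 \<le> K * norm w" unfolding K_def using \<open>0 \<le> B\<close> \<open>0 \<le> D\<close> by auto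
  ultimately have "norm (suminf c - c 0) \<le> 2 * 1 * (K * norm w)"
    using small unfolding K_def by (intro geometric_series_tail_le) auto
  moreover have "c 0 = 1" unfolding c_def by simp
  moreover have "hypergeom [a, b] [d, b + 1] w = suminf c" unfolding hypergeom_def c_def ..
  ultimately show ?thesis unfolding K_def by simp
qed

lemma hypergeom_2F2_shifted_minus_one_le:
  fixes a \<beta> d w :: complex
  assumes Bb: "\<forall>k. norm (inverse (\<beta> + 1 + of_nat k)) \<le> B"
      and Dd: "\<forall>k. norm (inverse (d + of_nat k)) \<le> D"
      and small: "(1 + norm a) * (1 + B) * D * norm w \<le> 1/2"
  shows "norm (hypergeom [a, \<beta> + of_nat \<nu>] [d, \<beta> + 1 + of_nat \<nu>] w - 1)
           \<le> 2 * ((1 + norm a) * (1 + B) * D) * norm w"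
proof -
  have "\<forall>k. norm (inverse (\<beta> + of_nat \<nu> + 1 + of_nat k)) \<le> B"
  proof
    fix k
    have "\<beta> + of_nat \<nu> + 1 + of_nat k = \<beta> + 1 + of_nat (\<nu> + k)" by (simp add: algebra_simps)
    thus "norm (inverse (\<beta> + of_nat \<nu> + 1 + of_nat k)) \<le> B" using Bb by metis
  qed
  from hypergeom_2F2_minus_one_le[OF this Dd small] show ?thesis
    by (simp add: add.commute add.left_commute)
qed

lemma add_of_nat_notin_nonpos_Ints:
  fixes b :: "'a :: ring_char_0"
  assumes "b \<notin> \<int>\<^sub>\<le>\<^sub>0"
  shows "b + of_nat n \<notin> \<int>\<^sub>\<le>\<^sub>0"
  using nonpos_Ints_diff_Nats[of "b + of_nat n" "of_nat n"] assms by auto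

lemma rGamma_add_of_nat:
  fixes b :: complex
  assumes "b \<notin> \<int>\<^sub>\<le>\<^sub>0"
  shows "rGamma (b + of_nat n) = rGamma b * inverse (pochhammer b n)"
proof -
  have "rGamma b = pochhammer b n * rGamma (b + of_nat n)" by (rule pochhammer_rGamma)
  moreover have "rGamma b \<noteq> 0" using assms by (simp add: rGamma_eq_zero_iff)
  ultimately show ?thesis by (auto simp: field_simps)
qed

definition fE_term :: "complex \<Rightarrow> complex \<Rightarrow> complex \<Rightarrow> complex \<Rightarrow> complex \<Rightarrow> nat \<Rightarrow> complex" where
  "fE_term \<alpha> \<beta> \<gamma> \<delta> z \<nu> =
     (inverse z) ^ \<nu> * Gamma (\<alpha> + \<gamma> + of_nat \<nu>) / (fact \<nu> * Gamma (\<beta> + of_nat \<nu>))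
       * macrobertE [\<alpha> + 1, \<beta> + of_nat \<nu>] [\<delta>, \<beta> + 1 + of_nat \<nu>] z"

lemma fE_eq_suminf_fE_term: "fE \<alpha> \<beta> \<gamma> \<delta> z = (\<Sum>\<nu>. fE_term \<alpha> \<beta> \<gamma> \<delta> z \<nu>)"
  unfolding fE_def fE_term_def ..

lemma fE_term_eq:
  assumes "\<alpha> + \<gamma> \<notin> \<int>\<^sub>\<le>\<^sub>0" and "\<beta> \<notin> \<int>\<^sub>\<le>\<^sub>0"
  shows "fE_term \<alpha> \<beta> \<gamma> \<delta> z \<nu> =
     inverse z ^ \<nu> * Gamma (\<alpha> + \<gamma>) * (pochhammer (\<alpha> + \<gamma>) \<nu> / fact \<nu>) * (Gamma (\<alpha> + 1) / Gamma \<delta>)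
       * rGamma (\<beta> + 1) * inverse (pochhammer (\<beta> + 1) \<nu>)
       * hypergeom [\<alpha> + 1, \<beta> + of_nat \<nu>] [\<delta>, \<beta> + 1 + of_nat \<nu>] (- 1 / z)"
    (is "_ = _ * ?H")
proof -
  have Gamma_num: "Gamma (\<alpha> + \<gamma> + of_nat \<nu>) = Gamma (\<alpha> + \<gamma>) * pochhammer (\<alpha> + \<gamma>) \<nu>"
    using pochhammer_Gamma[OF assms(1)] assms(1) by (simp add: Gamma_eq_zero_iff)
  have "Gamma (\<beta> + of_nat \<nu>) \<noteq> 0"
    using add_of_nat_notin_nonpos_Ints[OF assms(2)] by (simp add: Gamma_eq_zero_iff)
  hence "fE_term \<alpha> \<beta> \<gamma> \<delta> z \<nu> =
      inverse z ^ \<nu> * Gamma (\<alpha> + \<gamma>) * (pochhammer (\<alpha> + \<gamma>) \<nu> / fact \<nu>) * (Gamma (\<alpha> + 1) / Gamma \<delta>)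
        * inverse (Gamma (\<beta> + 1 + of_nat \<nu>)) * ?H"
    unfolding fE_term_def macrobertE_def Gamma_num by (simp add: field_simps)
  moreover have "inverse (Gamma (\<beta> + 1 + of_nat \<nu>)) = rGamma (\<beta> + 1) * inverse (pochhammer (\<beta> + 1) \<nu>)"
    using rGamma_add_of_nat[of "\<beta> + 1"] assms(2) plus_one_in_nonpos_Ints_imp
    by (auto simp: rGamma_inverse_Gamma)
  ultimately show ?thesis by (simp add: mult.assoc)
qed

lemma fE_term_0:
  assumes "\<beta> \<notin> \<int>\<^sub>\<le>\<^sub>0"
  shows "fE_term \<alpha> \<beta> \<gamma> \<delta> z 0 = Gamma (\<alpha> + 1) * Gamma (\<alpha> + \<gamma>) / (Gamma (\<beta> + 1) * Gamma \<delta>)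
           * hypergeom [\<alpha> + 1, \<beta>] [\<delta>, \<beta> + 1] (- 1 / z)"
  using assms unfolding fE_term_def macrobertE_def by (simp add: Gamma_eq_zero_iff field_simps)

lemma norm_fE_term_le:
  assumes "\<alpha> + \<gamma> \<notin> \<int>\<^sub>\<le>\<^sub>0" and "\<beta> \<notin> \<int>\<^sub>\<le>\<^sub>0"
      and Bb: "\<forall>k. norm (inverse (\<beta> + 1 + of_nat k)) \<le> B"
      and H: "norm (hypergeom [\<alpha> + 1, \<beta> + of_nat \<nu>] [\<delta>, \<beta> + 1 + of_nat \<nu>] (- 1 / z)) \<le> 2"
  shows "norm (fE_term \<alpha> \<beta> \<gamma> \<delta> z \<nu>)
           \<le> 2 * norm (Gamma (\<alpha> + \<gamma>)) * norm (Gamma (\<alpha> + 1) / Gamma \<delta>) * norm (rGamma (\<beta> + 1))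
             * ((1 + norm (\<alpha> + \<gamma>)) * B * norm (inverse z)) ^ \<nu>"
proof -
  have "0 \<le> B" using Bb norm_ge_zero order_trans by blast
  have "norm (fE_term \<alpha> \<beta> \<gamma> \<delta> z \<nu>) =
      norm (inverse z) ^ \<nu> * norm (Gamma (\<alpha> + \<gamma>)) * norm (pochhammer (\<alpha> + \<gamma>) \<nu> / fact \<nu>)
      * norm (Gamma (\<alpha> + 1) / Gamma \<delta>) * norm (rGamma (\<beta> + 1)) * norm (inverse (pochhammer (\<beta> + 1) \<nu>))
      * norm (hypergeom [\<alpha> + 1, \<beta> + of_nat \<nu>] [\<delta>, \<beta> + 1 + of_nat \<nu>] (- 1 / z))"
    by (simp only: fE_term_eq[OF assms(1,2)] norm_mult norm_power)
  also have "\<dots> \<le> norm (inverse z) ^ \<nu> * norm (Gamma (\<alpha> + \<gamma>)) * (1 + norm (\<alpha> + \<gamma>)) ^ \<nu>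
      * norm (Gamma (\<alpha> + 1) / Gamma \<delta>) * norm (rGamma (\<beta> + 1)) * B ^ \<nu> * 2"
    using norm_pochhammer_div_fact_le[of "\<alpha> + \<gamma>" \<nu>] norm_inverse_pochhammer_le[OF Bb, of \<nu>] H \<open>0 \<le> B\<close>
    by (intro mult_mono mult_nonneg_nonneg) auto
  finally show ?thesis by (simp add: power_mult_distrib mult_ac)
qed

lemma norm_fE_minus_constant_le:
  fixes \<alpha> \<beta> \<gamma> \<delta> z :: complex and B D :: real
  defines "c \<equiv> Gamma (\<alpha> + 1) * Gamma (\<alpha> + \<gamma>) / (Gamma (\<beta> + 1) * Gamma \<delta>)"
      and "K \<equiv> (1 + norm (\<alpha> + 1)) * (1 + B) * D"
      and "M \<equiv> (1 + norm (\<alpha> + \<gamma>)) * B"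
      and "C \<equiv> 2 * norm (Gamma (\<alpha> + \<gamma>)) * norm (Gamma (\<alpha> + 1) / Gamma \<delta>) * norm (rGamma (\<beta> + 1))"
  assumes "\<alpha> + \<gamma> \<notin> \<int>\<^sub>\<le>\<^sub>0" and "\<beta> \<notin> \<int>\<^sub>\<le>\<^sub>0"
      and Bb: "\<forall>k. norm (inverse (\<beta> + 1 + of_nat k)) \<le> B"
      and Dd: "\<forall>k. norm (inverse (\<delta> + of_nat k)) \<le> D"
      and K_small: "K * norm (inverse z) \<le> 1/2" and M_small: "M * norm (inverse z) \<le> 1/2"
  shows "norm (fE \<alpha> \<beta> \<gamma> \<delta> z - c) \<le> (2 * C * M + 2 * K * norm c) * norm (inverse z)"
proof -
  let ?t = "fE_term \<alpha> \<beta> \<gamma> \<delta> z"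
  define H where "H \<nu> = hypergeom [\<alpha> + 1, \<beta> + of_nat \<nu>] [\<delta>, \<beta> + 1 + of_nat \<nu>] (- 1 / z)" for \<nu>
  have "0 \<le> B" using Bb norm_ge_zero order_trans by blast
  have "norm (- 1 / z) = norm (inverse z)" by (simp add: norm_divide norm_inverse divide_inverse)
  hence H_near_1: "norm (H \<nu> - 1) \<le> 2 * K * norm (inverse z)" for \<nu>
    using hypergeom_2F2_shifted_minus_one_le[OF Bb Dd, of "\<alpha> + 1" "- 1 / z" \<nu>] K_small
    unfolding K_def H_def by simp
  have "norm (H \<nu>) \<le> 2" for \<nu>
    using norm_triangle_ineq2[of "H \<nu>" 1] H_near_1[of \<nu>] K_small by simp
  hence "norm (?t \<nu>) \<le> C * (M * norm (inverse z)) ^ \<nu>" for \<nu>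
    using norm_fE_term_le[OF assms(5,6) Bb] unfolding C_def M_def H_def by blast
  hence tail: "norm ((\<Sum>\<nu>. ?t \<nu>) - ?t 0) \<le> 2 * C * (M * norm (inverse z))"
    using M_small \<open>0 \<le> B\<close> unfolding M_def by (intro geometric_series_tail_le) auto
  have "norm (?t 0 - c) = norm c * norm (H 0 - 1)"
    unfolding fE_term_0[OF assms(6)] c_def H_def by (simp add: norm_mult[symmetric] algebra_simps)
  also have "\<dots> \<le> norm c * (2 * K * norm (inverse z))"
    using H_near_1[of 0] by (intro mult_left_mono) auto
  finally have head: "norm (?t 0 - c) \<le> norm c * (2 * K * norm (inverse z))" .
  have "norm (fE \<alpha> \<beta> \<gamma> \<delta> z - c) \<le> norm ((\<Sum>\<nu>. ?t \<nu>) - ?t 0) + norm (?t 0 - c)"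
    unfolding fE_eq_suminf_fE_term using norm_triangle_ineq[of "(\<Sum>\<nu>. ?t \<nu>) - ?t 0" "?t 0 - c"]
    by simp
  thus ?thesis using tail head by (simp add: algebra_simps)
qed

theorem mainTheorem4:
  fixes \<alpha> \<beta> \<gamma> \<delta> :: complex
  assumes "\<alpha> + 1 \<notin> \<int>\<^sub>\<le>\<^sub>0" and "\<alpha> + \<gamma> \<notin> \<int>\<^sub>\<le>\<^sub>0"
      and "\<beta> \<notin> \<int>\<^sub>\<le>\<^sub>0" and "\<delta> \<notin> \<int>\<^sub>\<le>\<^sub>0"
  shows "(\<lambda>z. fE \<alpha> \<beta> \<gamma> \<delta> z
            - Gamma (\<alpha> + 1) * Gamma (\<alpha> + \<gamma>) / (Gamma (\<beta> + 1) * Gamma \<delta>))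
         \<in> O[at_infinity](\<lambda>z. inverse z)"
proof -
  obtain B where "B \<ge> 1" and Bb: "\<forall>k. norm (inverse (\<beta> + 1 + of_nat k)) \<le> B"
    using bounded_inverse_add_of_nat[of "\<beta> + 1"] by auto
  obtain D where "D \<ge> 1" and Dd: "\<forall>k. norm (inverse (\<delta> + of_nat k)) \<le> D"
    using bounded_inverse_add_of_nat[of \<delta>] by auto
  define K where "K = (1 + norm (\<alpha> + 1)) * (1 + B) * D"
  define M where "M = (1 + norm (\<alpha> + \<gamma>)) * B"
  define C where "C = 2 * norm (Gamma (\<alpha> + \<gamma>)) * norm (Gamma (\<alpha> + 1) / Gamma \<delta>) * norm (rGamma (\<beta> + 1))"
  define c where "c = Gamma (\<alpha> + 1) * Gamma (\<alpha> + \<gamma>) / (Gamma (\<beta> + 1) * Gamma \<delta>)"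
  have "K \<ge> 0" "M \<ge> 0" using \<open>B \<ge> 1\<close> \<open>D \<ge> 1\<close> by (auto simp: K_def M_def)
  have "K * norm (inverse z) \<le> 1/2 \<and> M * norm (inverse z) \<le> 1/2" if "1 + 2 * K + 2 * M \<le> norm z" for z :: complex
  proof -
    have "2 * K \<le> norm z" "2 * M \<le> norm z" "z \<noteq> 0" using that \<open>K \<ge> 0\<close> \<open>M \<ge> 0\<close> by auto
    thus ?thesis by (simp add: norm_inverse norm_divide field_simps)
  qed
  hence "\<forall>\<^sub>F z :: complex in at_infinity. K * norm (inverse z) \<le> 1/2 \<and> M * norm (inverse z) \<le> 1/2"
    unfolding eventually_at_infinity by blast
  hence "\<forall>\<^sub>F z in at_infinity. norm (fE \<alpha> \<beta> \<gamma> \<delta> z - c) \<le> (2 * C * M + 2 * K * norm c) * norm (inverse z)"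
    using norm_fE_minus_constant_le[OF assms(2,3) Bb Dd]
    unfolding c_def C_def K_def M_def by (auto elim!: eventually_mono)
  thus ?thesis unfolding c_def by (rule bigoI)
qed

end
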